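(* Let $R$ be a ring and $\Psi:R\to R$ a ring endomorphism. Then $R$ is NJ-symmetric if and only if the skew formal power series ring $R[[x,\Psi]]$ is NJ-symmetric.
   Context: Rings are associative with identity. $R[[x,\Psi]]$ consists of formal power series $\sum_{i\ge 0} r_i x^i$ with $r_i\in R$, with multiplication determined by $xr=\Psi(r)x$ for $r\in R$. $N(S)$ is the set of nilpotent elements, $J(S)$ the Jacobson radical of a ring $S$. $S$ is NJ-symmetric if for all $a,b,c\in S$, $abc\in N(S)$ implies $bac\in J(S)$. *)

theory Defs
  imports "HOL-Algebra.Ideal" "HOL-Algebra.RingHom"
begin

definition left_ideal :: "('a, 'b) ring_scheme \<Rightarrow> 'a set \<Rightarrow> bool" where
  "left_ideal S I \<longleftrightarrow> additive_subgroup I S \<and>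
     (\<forall>r \<in> carrier S. \<forall>a \<in> I. r \<otimes>\<^bsub>S\<^esub> a \<in> I)"

definition maximal_left_ideal :: "('a, 'b) ring_scheme \<Rightarrow> 'a set \<Rightarrow> bool" where
  "maximal_left_ideal S M \<longleftrightarrow> left_ideal S M \<and> M \<noteq> carrier S \<and>
     (\<forall>L. left_ideal S L \<and> M \<subseteq> L \<longrightarrow> L = M \<or> L = carrier S)"

definition jacobson_radical :: "('a, 'b) ring_scheme \<Rightarrow> 'a set" where
  "jacobson_radical S = carrier S \<inter> \<Inter> {M. maximal_left_ideal S M}"

definition nilpotent_elems :: "('a, 'b) ring_scheme \<Rightarrow> 'a set" where
  "nilpotent_elems S = {a \<in> carrier S. \<exists>n::nat. a [^]\<^bsub>S\<^esub> n = \<zero>\<^bsub>S\<^esub>}"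

definition NJ_symmetric :: "('a, 'b) ring_scheme \<Rightarrow> bool" where
  "NJ_symmetric S \<longleftrightarrow> (\<forall>a \<in> carrier S. \<forall>b \<in> carrier S. \<forall>c \<in> carrier S.
     a \<otimes>\<^bsub>S\<^esub> b \<otimes>\<^bsub>S\<^esub> c \<in> nilpotent_elems S \<longrightarrow>
     b \<otimes>\<^bsub>S\<^esub> a \<otimes>\<^bsub>S\<^esub> c \<in> jacobson_radical S)"

text \<open>The skew formal power series ring R[[x,Psi]]: a series sum f_i x^i is the
  coefficient function f; multiplication is determined by x r = Psi(r) x, so
  (f g)_n = sum_{i+j=n} f_i Psi^i(g_j).\<close>

definition skew_fps_ring :: "('a, 'b) ring_scheme \<Rightarrow> ('a \<Rightarrow> 'a) \<Rightarrow> (nat \<Rightarrow> 'a) ring" where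
  "skew_fps_ring R \<Psi> =
    \<lparr> carrier = {f. \<forall>n. f n \<in> carrier R},
      mult = (\<lambda>f g. \<lambda>n. \<Oplus>\<^bsub>R\<^esub> i \<in> {..n}. f i \<otimes>\<^bsub>R\<^esub> (\<Psi> ^^ i) (g (n - i))),
      one = (\<lambda>n. if n = 0 then \<one>\<^bsub>R\<^esub> else \<zero>\<^bsub>R\<^esub>),
      zero = (\<lambda>n. \<zero>\<^bsub>R\<^esub>),
      add = (\<lambda>f g. \<lambda>n. f n \<oplus>\<^bsub>R\<^esub> g n) \<rparr>"

end

theory Submission
  imports Defs "HOL-Algebra.UnivPoly"
begin

text \<open>Taking constant terms is a ring homomorphism from R[[x,Psi]] onto R, split by the
  embedding of constant series. Its kernel lies in the Jacobson radical: if f has zero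
  constant term then so has g f for every g, and 1 - g f has a left inverse whose
  coefficients are determined recursively. Consequently maximal left ideals of R[[x,Psi]]
  and of R correspond to each other, the Jacobson radical of R[[x,Psi]] is the preimage of
  that of R, and NJ-symmetry transfers in both directions: homomorphisms preserve
  nilpotency, and the splitting lifts a nilpotent product in R to one in R[[x,Psi]].\<close>

lemma jacobson_radical_iff:
  "x \<in> jacobson_radical S \<longleftrightarrow> x \<in> carrier S \<and> (\<forall>M. maximal_left_ideal S M \<longrightarrow> x \<in> M)"
  by (auto simp: jacobson_radical_def)

context ring
begin

lemma left_ideal_subset: "left_ideal R I \<Longrightarrow> I \<subseteq> carrier R"
  unfolding left_ideal_def by (intro additive_subgroup.a_subset) (elim conjE)

lemma left_ideal_zero: "left_ideal R I \<Longrightarrow> \<zero> \<in> I"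
  unfolding left_ideal_def by (intro additive_subgroup.zero_closed) (elim conjE)

lemma left_ideal_add: "left_ideal R I \<Longrightarrow> a \<in> I \<Longrightarrow> b \<in> I \<Longrightarrow> a \<oplus> b \<in> I"
  unfolding left_ideal_def by (elim conjE, intro additive_subgroup.a_closed)

lemma left_ideal_a_inv: "left_ideal R I \<Longrightarrow> a \<in> I \<Longrightarrow> \<ominus> a \<in> I"
  unfolding left_ideal_def by (elim conjE, intro additive_subgroup.a_inv_closed)

lemma left_ideal_mult: "left_ideal R I \<Longrightarrow> r \<in> carrier R \<Longrightarrow> a \<in> I \<Longrightarrow> r \<otimes> a \<in> I"
  unfolding left_ideal_def by simp

lemma left_idealI:
  assumes "I \<subseteq> carrier R" "\<zero> \<in> I" "\<And>a b. a \<in> I \<Longrightarrow> b \<in> I \<Longrightarrow> a \<oplus> b \<in> I"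
    "\<And>a. a \<in> I \<Longrightarrow> \<ominus> a \<in> I" "\<And>r a. r \<in> carrier R \<Longrightarrow> a \<in> I \<Longrightarrow> r \<otimes> a \<in> I"
  shows "left_ideal R I"
  unfolding left_ideal_def
proof (intro conjI ballI)
  show "additive_subgroup I R"
    by (intro additive_subgroupI subgroup.intro) (use assms in \<open>auto simp: a_inv_def\<close>)
qed (use assms in auto)

lemma left_ideal_eq_carrier:
  assumes I: "left_ideal R I" and one: "\<one> \<in> I"
  shows "I = carrier R"
proof
  show "carrier R \<subseteq> I"
    using left_ideal_mult[OF I _ one] by (metis r_one subsetI)
qed (rule left_ideal_subset[OF I])

lemma left_ideal_add_left_multiples:
  assumes M: "left_ideal R M" and k: "k \<in> carrier R"
  shows "left_ideal R {m \<oplus> s \<otimes> k | m s. m \<in> M \<and> s \<in> carrier R}" (is "left_ideal R ?L")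
proof (rule left_idealI)
  have Mc: "M \<subseteq> carrier R" using M by (rule left_ideal_subset)
  show "?L \<subseteq> carrier R" using Mc k by auto
  show "\<zero> \<in> ?L"
    using left_ideal_zero[OF M] k by (intro CollectI exI[of _ \<zero>]) simp
  fix a b assume "a \<in> ?L" "b \<in> ?L"
  then obtain m s m' s' where m: "m \<in> M" "s \<in> carrier R" "a = m \<oplus> s \<otimes> k"
    and m': "m' \<in> M" "s' \<in> carrier R" "b = m' \<oplus> s' \<otimes> k" by blast
  have "a \<oplus> b = (m \<oplus> m') \<oplus> (s \<oplus> s') \<otimes> k"
    using m m' Mc k by (simp add: l_distr a_ac subsetD)
  then show "a \<oplus> b \<in> ?L" using m m' left_ideal_add[OF M] by blast
  have "\<ominus> a = (\<ominus> m) \<oplus> (\<ominus> s) \<otimes> k"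
    using m Mc k by (simp add: minus_add l_minus subsetD)
  then show "\<ominus> a \<in> ?L" using m left_ideal_a_inv[OF M] by blast
  fix r assume r: "r \<in> carrier R"
  have "r \<otimes> a = (r \<otimes> m) \<oplus> (r \<otimes> s) \<otimes> k"
    using m Mc k r by (simp add: r_distr m_assoc subsetD)
  then show "r \<otimes> a \<in> ?L" using m r left_ideal_mult[OF M] by blast
qed

text \<open>An element k such that every 1 - s k has a left inverse lies in every maximal
  left ideal M: otherwise M + R k is the whole ring, so 1 = m + s k and m = 1 - s k
  would be a left unit inside M.\<close>

lemma left_quasi_regular_in_jacobson_radical:
  assumes k: "k \<in> carrier R"
    and inv: "\<And>s. s \<in> carrier R \<Longrightarrow> \<exists>u\<in>carrier R. u \<otimes> (\<one> \<ominus> s \<otimes> k) = \<one>"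
  shows "k \<in> jacobson_radical R"
proof -
  have "k \<in> M" if "maximal_left_ideal R M" for M
  proof (rule ccontr)
    assume "k \<notin> M"
    have M: "left_ideal R M" "M \<noteq> carrier R"
      and max: "\<And>L. left_ideal R L \<Longrightarrow> M \<subseteq> L \<Longrightarrow> L = M \<or> L = carrier R"
      using that unfolding maximal_left_ideal_def by blast+
    have Mc: "M \<subseteq> carrier R" using M(1) by (rule left_ideal_subset)
    let ?L = "{m \<oplus> s \<otimes> k | m s. m \<in> M \<and> s \<in> carrier R}"
    have "m \<in> ?L" if "m \<in> M" for m
    proof -
      have "m = m \<oplus> \<zero> \<otimes> k" using that Mc k by auto
      then show ?thesis using that by blast
    qed
    then have "M \<subseteq> ?L" by blast
    moreover have "k \<in> ?L"
    proof -
      have "k = \<zero> \<oplus> \<one> \<otimes> k" using k by simp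
      then show ?thesis using left_ideal_zero[OF M(1)] by blast
    qed
    ultimately have "?L \<noteq> M" "M \<subseteq> ?L" using \<open>k \<notin> M\<close> by blast+
    then have "?L = carrier R" using max[OF left_ideal_add_left_multiples[OF M(1) k]] by blast
    then have "\<one> \<in> ?L" by simp
    then obtain m s where m: "m \<in> M" and s: "s \<in> carrier R" and one: "\<one> = m \<oplus> s \<otimes> k"
      by blast
    have "m = \<one> \<ominus> s \<otimes> k"
      using one m Mc s k by (simp add: a_minus_def a_assoc r_neg subsetD)
    then obtain u where "u \<in> carrier R" "u \<otimes> m = \<one>" using inv[OF s] by blast
    then have "\<one> \<in> M" using left_ideal_mult[OF M(1) _ m] by metis
    then show False using left_ideal_eq_carrier[OF M(1)] M(2) by blast
  qed
  then show ?thesis using k unfolding jacobson_radical_def by blast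
qed

end

context ring_hom_ring
begin

lemma left_ideal_vimage:
  assumes L: "left_ideal S L"
  shows "left_ideal R {x \<in> carrier R. h x \<in> L}"
  by (rule R.left_idealI)
    (auto simp: S.left_ideal_zero[OF L] S.left_ideal_add[OF L] S.left_ideal_a_inv[OF L]
      S.left_ideal_mult[OF L])

lemma left_ideal_image:
  assumes surj: "h ` carrier R = carrier S" and I: "left_ideal R I"
  shows "left_ideal S (h ` I)"
proof (rule S.left_idealI)
  have Ic: "I \<subseteq> carrier R" using I by (rule R.left_ideal_subset)
  then show "h ` I \<subseteq> carrier S" by auto
  show "\<zero>\<^bsub>S\<^esub> \<in> h ` I" using R.left_ideal_zero[OF I] hom_zero by (metis image_eqI)
  fix a b assume "a \<in> h ` I" "b \<in> h ` I"
  then obtain x y where xy: "x \<in> I" "y \<in> I" and ab: "a = h x" "b = h y" by blast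
  have xyc: "x \<in> carrier R" "y \<in> carrier R" using xy Ic by auto
  have "a \<oplus>\<^bsub>S\<^esub> b = h (x \<oplus> y)" using ab xyc by simp
  then show "a \<oplus>\<^bsub>S\<^esub> b \<in> h ` I" using R.left_ideal_add[OF I xy] by blast
  have "\<ominus>\<^bsub>S\<^esub> a = h (\<ominus> x)" using ab xyc by simp
  then show "\<ominus>\<^bsub>S\<^esub> a \<in> h ` I" using R.left_ideal_a_inv[OF I xy(1)] by blast
  fix r assume "r \<in> carrier S"
  then obtain r' where r': "r' \<in> carrier R" "r = h r'" using surj by blast
  have "r \<otimes>\<^bsub>S\<^esub> a = h (r' \<otimes> x)" using r' ab xyc by simp
  then show "r \<otimes>\<^bsub>S\<^esub> a \<in> h ` I" using R.left_ideal_mult[OF I r'(1) xy(1)] by blast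
qed

lemma vimage_image_eq_if_kernel_subset:
  assumes I: "left_ideal R I" and ker: "a_kernel R S h \<subseteq> I"
  shows "{x \<in> carrier R. h x \<in> h ` I} = I"
proof (intro equalityI subsetI)
  fix x assume "x \<in> {x \<in> carrier R. h x \<in> h ` I}"
  then obtain y where x: "x \<in> carrier R" and y: "y \<in> I" "h x = h y" by auto
  then have "x \<in> a_kernel R S h +> y"
    using I R.left_ideal_subset by (intro homeq_imp_rcos) auto
  then obtain z where "z \<in> a_kernel R S h" "x = z \<oplus> y"
    unfolding a_r_coset_def' by blast
  then show "x \<in> I" using ker y R.left_ideal_add[OF I] by blast
qed (use I R.left_ideal_subset in auto)

lemma maximal_left_ideal_vimage:
  assumes surj: "h ` carrier R = carrier S" and M: "maximal_left_ideal S M"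
  shows "maximal_left_ideal R {x \<in> carrier R. h x \<in> M}" (is "maximal_left_ideal R ?P")
proof -
  have Ml: "left_ideal S M" and MS: "M \<noteq> carrier S"
    and max: "\<And>L. left_ideal S L \<Longrightarrow> M \<subseteq> L \<Longrightarrow> L = M \<or> L = carrier S"
    using M unfolding maximal_left_ideal_def by blast+
  have Mc: "M \<subseteq> carrier S" using Ml by (rule S.left_ideal_subset)
  have "\<one>\<^bsub>S\<^esub> \<notin> M" using S.left_ideal_eq_carrier[OF Ml] MS by blast
  then have "\<one> \<notin> ?P" by simp
  then have "?P \<noteq> carrier R" by blast
  moreover have "L = ?P \<or> L = carrier R" if L: "left_ideal R L" and PL: "?P \<subseteq> L" for L
  proof -
    have Lc: "L \<subseteq> carrier R" using L by (rule R.left_ideal_subset)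
    have "M \<subseteq> h ` L"
    proof
      fix a assume "a \<in> M"
      then obtain x where "x \<in> carrier R" "a = h x" using Mc surj by blast
      then show "a \<in> h ` L" using PL \<open>a \<in> M\<close> by blast
    qed
    then consider "h ` L = M" | "h ` L = carrier S"
      using max[OF left_ideal_image[OF surj L]] by blast
    then show ?thesis
    proof cases
      case 1
      then have "L \<subseteq> ?P" using Lc by blast
      then show ?thesis using PL by blast
    next
      case 2
      then obtain f where f: "f \<in> L" "h f = \<one>\<^bsub>S\<^esub>" by (metis S.one_closed imageE)
      then have fc: "f \<in> carrier R" using Lc by blast
      have "h (\<one> \<ominus> f) = \<zero>\<^bsub>S\<^esub>" using f fc by (simp add: a_minus_def S.r_neg)
      then have "\<one> \<ominus> f \<in> ?P" using fc S.left_ideal_zero[OF Ml] by simp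
      then have "(\<one> \<ominus> f) \<oplus> f \<in> L" using PL f(1) R.left_ideal_add[OF L] by blast
      moreover have "(\<one> \<ominus> f) \<oplus> f = \<one>" using fc by (simp add: a_minus_def R.a_assoc R.l_neg)
      ultimately show ?thesis using R.left_ideal_eq_carrier[OF L] by simp
    qed
  qed
  ultimately show ?thesis
    using left_ideal_vimage[OF Ml] unfolding maximal_left_ideal_def by blast
qed

lemma maximal_left_ideal_image:
  assumes surj: "h ` carrier R = carrier S" and M: "maximal_left_ideal R M"
    and ker: "a_kernel R S h \<subseteq> M"
  shows "maximal_left_ideal S (h ` M)"
proof -
  have Ml: "left_ideal R M" and MR: "M \<noteq> carrier R"
    and max: "\<And>L. left_ideal R L \<Longrightarrow> M \<subseteq> L \<Longrightarrow> L = M \<or> L = carrier R"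
    using M unfolding maximal_left_ideal_def by blast+
  have Mc: "M \<subseteq> carrier R" using Ml by (rule R.left_ideal_subset)
  have sat: "{x \<in> carrier R. h x \<in> h ` M} = M"
    using Ml ker by (rule vimage_image_eq_if_kernel_subset)
  have "\<one> \<notin> M" using R.left_ideal_eq_carrier[OF Ml] MR by blast
  then have "\<one>\<^bsub>S\<^esub> \<notin> h ` M" using sat by force
  then have "h ` M \<noteq> carrier S" by blast
  moreover have "L = h ` M \<or> L = carrier S" if L: "left_ideal S L" and hM_L: "h ` M \<subseteq> L" for L
  proof -
    let ?P = "{x \<in> carrier R. h x \<in> L}"
    have "L \<subseteq> h ` ?P"
    proof
      fix y assume "y \<in> L"
      moreover have "L \<subseteq> carrier S" using L by (rule S.left_ideal_subset)
      ultimately obtain x where "x \<in> carrier R" "y = h x" using surj by blast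
      then show "y \<in> h ` ?P" using \<open>y \<in> L\<close> by blast
    qed
    then have "L = h ` ?P" by blast
    moreover have "M \<subseteq> ?P" using hM_L Mc by blast
    then have "?P = M \<or> ?P = carrier R" using max[OF left_ideal_vimage[OF L]] by blast
    ultimately show ?thesis using surj by blast
  qed
  ultimately show ?thesis
    using left_ideal_image[OF surj Ml] unfolding maximal_left_ideal_def by blast
qed

lemma jacobson_radical_eq_vimage:
  assumes surj: "h ` carrier R = carrier S" and ker: "a_kernel R S h \<subseteq> jacobson_radical R"
  shows "jacobson_radical R = {x \<in> carrier R. h x \<in> jacobson_radical S}"
proof (intro equalityI subsetI)
  fix x assume x: "x \<in> jacobson_radical R"
  have "h x \<in> M" if "maximal_left_ideal S M" for M
  proof -
    have "x \<in> {x \<in> carrier R. h x \<in> M}"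
      using x maximal_left_ideal_vimage[OF surj that] unfolding jacobson_radical_iff by blast
    then show ?thesis by simp
  qed
  then show "x \<in> {x \<in> carrier R. h x \<in> jacobson_radical S}"
    using x by (simp add: jacobson_radical_iff)
next
  fix x assume x: "x \<in> {x \<in> carrier R. h x \<in> jacobson_radical S}"
  have "x \<in> M" if M: "maximal_left_ideal R M" for M
  proof -
    have "a_kernel R S h \<subseteq> M"
      using ker M by (auto simp: jacobson_radical_iff)
    have "h x \<in> h ` M"
      using x maximal_left_ideal_image[OF surj M \<open>a_kernel R S h \<subseteq> M\<close>]
      by (simp add: jacobson_radical_iff)
    moreover have "left_ideal R M" using M unfolding maximal_left_ideal_def by blast
    then have "{x \<in> carrier R. h x \<in> h ` M} = M"
      using \<open>a_kernel R S h \<subseteq> M\<close> by (rule vimage_image_eq_if_kernel_subset)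
    ultimately show ?thesis using x by blast
  qed
  then show "x \<in> jacobson_radical R" using x by (simp add: jacobson_radical_iff)
qed

lemma nilpotent_elems_image:
  assumes "x \<in> nilpotent_elems R"
  shows "h x \<in> nilpotent_elems S"
proof -
  obtain n where x: "x \<in> carrier R" and "x [^] (n::nat) = \<zero>"
    using assms unfolding nilpotent_elems_def by blast
  then have "h x [^]\<^bsub>S\<^esub> n = \<zero>\<^bsub>S\<^esub>" by (simp add: hom_nat_pow[symmetric])
  then show ?thesis using x unfolding nilpotent_elems_def by auto
qed

lemma NJ_symmetric_if_reflects_jacobson_radical:
  assumes reflect: "\<And>x. x \<in> carrier R \<Longrightarrow> h x \<in> jacobson_radical S \<Longrightarrow> x \<in> jacobson_radical R"
    and NJ: "NJ_symmetric S"
  shows "NJ_symmetric R"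
  unfolding NJ_symmetric_def
proof (intro ballI impI)
  fix a b c assume abc: "a \<in> carrier R" "b \<in> carrier R" "c \<in> carrier R"
    and nil: "a \<otimes> b \<otimes> c \<in> nilpotent_elems R"
  have "h (a \<otimes> b \<otimes> c) \<in> nilpotent_elems S"
    using nil by (rule nilpotent_elems_image)
  then have "h a \<otimes>\<^bsub>S\<^esub> h b \<otimes>\<^bsub>S\<^esub> h c \<in> nilpotent_elems S" using abc by simp
  then have "h (b \<otimes> a \<otimes> c) \<in> jacobson_radical S"
    using NJ abc unfolding NJ_symmetric_def by simp
  then show "b \<otimes> a \<otimes> c \<in> jacobson_radical R" using abc by (intro reflect) simp_all
qed

theorem NJ_symmetric_iff_of_retraction:
  assumes g: "g \<in> ring_hom S R" and retr: "\<And>a. a \<in> carrier S \<Longrightarrow> h (g a) = a"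
    and ker: "a_kernel R S h \<subseteq> jacobson_radical R"
  shows "NJ_symmetric R \<longleftrightarrow> NJ_symmetric S"
proof -
  have surj: "h ` carrier R = carrier S"
  proof (intro equalityI subsetI)
    fix a assume "a \<in> carrier S"
    then show "a \<in> h ` carrier R" using retr ring_hom_closed[OF g] by (metis image_eqI)
  qed auto
  note J = jacobson_radical_eq_vimage[OF surj ker]
  interpret G: ring_hom_ring S R g by (intro ring_hom_ringI2 S.ring_axioms R.ring_axioms g)
  show ?thesis
  proof
    assume NJ: "NJ_symmetric R"
    have "a \<in> jacobson_radical S" if a: "a \<in> carrier S" and "g a \<in> jacobson_radical R" for a
    proof -
      have "h (g a) \<in> jacobson_radical S" using that(2) by (simp add: J)
      then show ?thesis using retr[OF a] by simp
    qed
    then show "NJ_symmetric S" using NJ by (rule G.NJ_symmetric_if_reflects_jacobson_radical)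
  next
    assume NJ: "NJ_symmetric S"
    have "x \<in> jacobson_radical R" if "x \<in> carrier R" "h x \<in> jacobson_radical S" for x
      using that by (simp add: J)
    then show "NJ_symmetric R" using NJ by (rule NJ_symmetric_if_reflects_jacobson_radical)
  qed
qed

end

lemma (in abelian_monoid) finsum_triangle_reindex:
  assumes F: "\<And>i k. F i k \<in> carrier G"
  shows "(\<Oplus>j\<in>{..n::nat}. \<Oplus>i\<in>{..j}. F i (j - i)) = (\<Oplus>i\<in>{..n}. \<Oplus>k\<in>{..n - i}. F i k)"
proof (induction n)
  case 0
  then show ?case using F by simp
next
  case (Suc n)
  let ?D = "\<Oplus>i\<in>{..n}. F i (Suc n - i)"
  have D: "?D \<in> carrier G" by (simp add: F)
  have "(\<Oplus>j\<in>{..Suc n}. \<Oplus>i\<in>{..j}. F i (j - i))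
      = (F (Suc n) 0 \<oplus> ?D) \<oplus> (\<Oplus>j\<in>{..n}. \<Oplus>i\<in>{..j}. F i (j - i))"
    using F by (simp add: Pi_def)
  also have "\<dots> = F (Suc n) 0 \<oplus> (?D \<oplus> (\<Oplus>i\<in>{..n}. \<Oplus>k\<in>{..n - i}. F i k))"
    using F D by (simp add: Suc a_assoc)
  also have "?D \<oplus> (\<Oplus>i\<in>{..n}. \<Oplus>k\<in>{..n - i}. F i k)
      = (\<Oplus>i\<in>{..n}. F i (Suc n - i) \<oplus> (\<Oplus>k\<in>{..n - i}. F i k))"
    using F by (simp add: finsum_addf)
  also have "\<dots> = (\<Oplus>i\<in>{..n}. \<Oplus>k\<in>{..Suc n - i}. F i k)"
  proof (rule finsum_cong')
    fix i assume "i \<in> {..n}"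
    then have "Suc n - i = Suc (n - i)" by auto
    then show "F i (Suc n - i) \<oplus> (\<Oplus>k\<in>{..n - i}. F i k) = (\<Oplus>k\<in>{..Suc n - i}. F i k)"
      using F by simp
  qed (simp_all add: F Pi_def)
  also have "F (Suc n) 0 \<oplus> \<dots> = (\<Oplus>i\<in>{..Suc n}. \<Oplus>k\<in>{..Suc n - i}. F i k)"
    using F by (simp add: Pi_def)
  finally show ?case .
qed

locale skew_fps = R?: ring R for R (structure) +
  fixes \<Psi> :: "'a \<Rightarrow> 'a"
  assumes endo: "\<Psi> \<in> ring_hom R R"
begin

abbreviation S where "S \<equiv> skew_fps_ring R \<Psi>"

lemma funpow_ring_hom: "\<Psi> ^^ i \<in> ring_hom R R"
proof (induction i)
  case 0
  show ?case by (simp only: funpow.simps id_ring_hom)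
next
  case (Suc i)
  show ?case by (simp only: funpow.simps(2)) (rule ring_hom_trans[OF Suc.IH endo])
qed

sublocale Psi_pow: ring_hom_ring R R "\<Psi> ^^ i" for i
  by (intro ring_hom_ringI2 R.ring_axioms funpow_ring_hom)

lemma carrier_S_iff: "f \<in> carrier S \<longleftrightarrow> (\<forall>n. f n \<in> carrier R)"
  by (simp add: skew_fps_ring_def)

lemma mult_S_apply: "(f \<otimes>\<^bsub>S\<^esub> g) n = (\<Oplus>i\<in>{..n}. f i \<otimes> (\<Psi> ^^ i) (g (n - i)))"
  by (simp add: skew_fps_ring_def)

lemma add_S_apply: "(f \<oplus>\<^bsub>S\<^esub> g) n = f n \<oplus> g n"
  by (simp add: skew_fps_ring_def)

lemma one_S_apply: "\<one>\<^bsub>S\<^esub> n = (if n = 0 then \<one> else \<zero>)"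
  by (simp add: skew_fps_ring_def)

lemma zero_S_apply: "\<zero>\<^bsub>S\<^esub> n = \<zero>"
  by (simp add: skew_fps_ring_def)

lemma mult_S_closed: "f \<in> carrier S \<Longrightarrow> g \<in> carrier S \<Longrightarrow> f \<otimes>\<^bsub>S\<^esub> g \<in> carrier S"
  by (auto simp: carrier_S_iff mult_S_apply intro!: finsum_closed)

lemma mult_S_assoc:
  assumes f: "f \<in> carrier S" and g: "g \<in> carrier S" and h: "h \<in> carrier S"
  shows "(f \<otimes>\<^bsub>S\<^esub> g) \<otimes>\<^bsub>S\<^esub> h = f \<otimes>\<^bsub>S\<^esub> (g \<otimes>\<^bsub>S\<^esub> h)"
proof
  fix n
  have [simp]: "f i \<in> carrier R" "g i \<in> carrier R" "h i \<in> carrier R" for i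
    using f g h by (auto simp: carrier_S_iff)
  define F where "F i k = f i \<otimes> (\<Psi> ^^ i) (g k) \<otimes> (\<Psi> ^^ (i + k)) (h (n - (i + k)))" for i k
  have F_closed: "F i k \<in> carrier R" for i k by (simp add: F_def)
  have "((f \<otimes>\<^bsub>S\<^esub> g) \<otimes>\<^bsub>S\<^esub> h) n
      = (\<Oplus>j\<in>{..n}. (\<Oplus>i\<in>{..j}. f i \<otimes> (\<Psi> ^^ i) (g (j - i))) \<otimes> (\<Psi> ^^ j) (h (n - j)))"
    by (simp add: mult_S_apply Pi_def)
  also have "\<dots> = (\<Oplus>j\<in>{..n}. \<Oplus>i\<in>{..j}. F i (j - i))"
    by (intro finsum_cong') (auto simp: finsum_ldistr F_def Pi_def F_closed intro!: finsum_cong')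
  also have "\<dots> = (\<Oplus>i\<in>{..n}. \<Oplus>k\<in>{..n - i}. F i k)"
    using F_closed by (rule finsum_triangle_reindex)
  also have "\<dots> = (f \<otimes>\<^bsub>S\<^esub> (g \<otimes>\<^bsub>S\<^esub> h)) n"
    unfolding mult_S_apply
  proof (intro finsum_cong')
    fix i assume "i \<in> {..n}"
    have "f i \<otimes> (\<Psi> ^^ i) (\<Oplus>k\<in>{..n - i}. g k \<otimes> (\<Psi> ^^ k) (h (n - i - k)))
        = (\<Oplus>k\<in>{..n - i}. f i \<otimes> (\<Psi> ^^ i) (g k \<otimes> (\<Psi> ^^ k) (h (n - i - k))))"
      by (simp add: Pi_def finsum_rdistr comp_def)
    also have "\<dots> = (\<Oplus>k\<in>{..n - i}. F i k)"
      by (intro finsum_cong') (auto simp: F_def m_assoc funpow_add diff_diff_left Pi_def)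
    finally show "(\<Oplus>k\<in>{..n - i}. F i k)
        = f i \<otimes> (\<Psi> ^^ i) (\<Oplus>k\<in>{..n - i}. g k \<otimes> (\<Psi> ^^ k) (h (n - i - k)))" by simp
  qed (auto simp: Pi_def F_closed)
  finally show "((f \<otimes>\<^bsub>S\<^esub> g) \<otimes>\<^bsub>S\<^esub> h) n = (f \<otimes>\<^bsub>S\<^esub> (g \<otimes>\<^bsub>S\<^esub> h)) n" .
qed

lemma one_S_closed: "\<one>\<^bsub>S\<^esub> \<in> carrier S"
  by (simp add: carrier_S_iff one_S_apply)

lemma one_S_mult: "f \<in> carrier S \<Longrightarrow> \<one>\<^bsub>S\<^esub> \<otimes>\<^bsub>S\<^esub> f = f"
proof
  fix n assume "f \<in> carrier S"
  then have [simp]: "f i \<in> carrier R" for i by (simp add: carrier_S_iff)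
  have "(\<one>\<^bsub>S\<^esub> \<otimes>\<^bsub>S\<^esub> f) n = (\<Oplus>i\<in>{..n}. if 0 = i then f (n - i) else \<zero>)"
    unfolding mult_S_apply one_S_apply by (intro finsum_cong') auto
  also have "\<dots> = f (n - 0)" by (rule finsum_singleton) auto
  finally show "(\<one>\<^bsub>S\<^esub> \<otimes>\<^bsub>S\<^esub> f) n = f n" by simp
qed

lemma mult_S_one: "f \<in> carrier S \<Longrightarrow> f \<otimes>\<^bsub>S\<^esub> \<one>\<^bsub>S\<^esub> = f"
proof
  fix n assume "f \<in> carrier S"
  then have [simp]: "f i \<in> carrier R" for i by (simp add: carrier_S_iff)
  have "(f \<otimes>\<^bsub>S\<^esub> \<one>\<^bsub>S\<^esub>) n = (\<Oplus>i\<in>{..n}. if n = i then f i else \<zero>)"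
    unfolding mult_S_apply one_S_apply by (intro finsum_cong') auto
  also have "\<dots> = f n" by (rule finsum_singleton) auto
  finally show "(f \<otimes>\<^bsub>S\<^esub> \<one>\<^bsub>S\<^esub>) n = f n" .
qed

lemma ring_S: "ring S"
proof (rule ringI)
  show "abelian_group S"
  proof (rule abelian_groupI)
    fix x assume x: "x \<in> carrier S"
    show "\<exists>y\<in>carrier S. y \<oplus>\<^bsub>S\<^esub> x = \<zero>\<^bsub>S\<^esub>"
      using x by (intro bexI[of _ "\<lambda>n. \<ominus> x n"]) (auto simp: carrier_S_iff add_S_apply zero_S_apply l_neg)
  qed (auto simp: carrier_S_iff add_S_apply zero_S_apply a_ac)
  show "monoid S"
    by (rule monoidI) (simp_all add: mult_S_closed mult_S_assoc one_S_mult mult_S_one one_S_closed)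
next
  fix x y z assume "x \<in> carrier S" "y \<in> carrier S" "z \<in> carrier S"
  then have [simp]: "x i \<in> carrier R" "y i \<in> carrier R" "z i \<in> carrier R" for i
    by (auto simp: carrier_S_iff)
  show "(x \<oplus>\<^bsub>S\<^esub> y) \<otimes>\<^bsub>S\<^esub> z = x \<otimes>\<^bsub>S\<^esub> z \<oplus>\<^bsub>S\<^esub> y \<otimes>\<^bsub>S\<^esub> z"
    by (rule ext) (simp add: mult_S_apply add_S_apply l_distr finsum_addf Pi_def)
  show "z \<otimes>\<^bsub>S\<^esub> (x \<oplus>\<^bsub>S\<^esub> y) = z \<otimes>\<^bsub>S\<^esub> x \<oplus>\<^bsub>S\<^esub> z \<otimes>\<^bsub>S\<^esub> y"
    by (rule ext) (simp add: mult_S_apply add_S_apply r_distr finsum_addf Pi_def)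
qed

sublocale S: ring S
  by (rule ring_S)

lemma coeff0_ring_hom_ring: "ring_hom_ring S R (\<lambda>f. f 0)"
  by (intro ring_hom_ringI2 ring_S R.ring_axioms ring_hom_memI)
    (simp_all add: carrier_S_iff mult_S_apply add_S_apply one_S_apply)

definition const_series :: "'a \<Rightarrow> nat \<Rightarrow> 'a" where
  "const_series a = (\<lambda>n. if n = 0 then a else \<zero>)"

lemma const_series_ring_hom: "const_series \<in> ring_hom R S"
proof (rule ring_hom_memI)
  fix a b assume [simp]: "a \<in> carrier R" "b \<in> carrier R"
  show "const_series (a \<otimes> b) = const_series a \<otimes>\<^bsub>S\<^esub> const_series b"
  proof
    fix n
    have "(const_series a \<otimes>\<^bsub>S\<^esub> const_series b) n
        = (\<Oplus>i\<in>{..n}. if 0 = i then a \<otimes> const_series b (n - i) else \<zero>)"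
      unfolding mult_S_apply by (intro finsum_cong') (auto simp: const_series_def)
    also have "\<dots> = a \<otimes> const_series b (n - 0)"
      by (rule finsum_singleton) (auto simp: const_series_def)
    finally show "const_series (a \<otimes> b) n = (const_series a \<otimes>\<^bsub>S\<^esub> const_series b) n"
      by (simp add: const_series_def)
  qed
qed (auto simp: const_series_def carrier_S_iff add_S_apply one_S_apply)

text \<open>If q 0 = 0, the left inverse u of 1 - q is the solution of u = 1 + u q, whose
  coefficients satisfy u 0 = 1 and u (n + 1) = sum of u i * Psi^i (q (n + 1 - i)) over
  i \<le> n. The entries 0..n of inv_prefix q n are u 0, ..., u n.\<close>

primrec inv_prefix :: "(nat \<Rightarrow> 'a) \<Rightarrow> nat \<Rightarrow> nat \<Rightarrow> 'a" where
  "inv_prefix q 0 = (\<lambda>_. \<one>)"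
| "inv_prefix q (Suc n) =
    (inv_prefix q n)(Suc n := \<Oplus>i\<in>{..n}. inv_prefix q n i \<otimes> (\<Psi> ^^ i) (q (Suc n - i)))"

definition left_inv_series :: "(nat \<Rightarrow> 'a) \<Rightarrow> nat \<Rightarrow> 'a" where
  "left_inv_series q n = inv_prefix q n n"

lemma inv_prefix_stable: "i \<le> n \<Longrightarrow> inv_prefix q n i = left_inv_series q i"
proof -
  have "inv_prefix q (i + d) i = inv_prefix q i i" for d
    by (induction d) auto
  then show "i \<le> n \<Longrightarrow> inv_prefix q n i = left_inv_series q i"
    unfolding left_inv_series_def by (metis le_add_diff_inverse)
qed

lemma inv_prefix_closed:
  assumes q: "q \<in> carrier S"
  shows "inv_prefix q n i \<in> carrier R"
proof (induction n arbitrary: i)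
  case (Suc n)
  have "(\<Oplus>j\<in>{..n}. inv_prefix q n j \<otimes> (\<Psi> ^^ j) (q (Suc n - j))) \<in> carrier R"
    using Suc q by (intro finsum_closed) (auto simp: carrier_S_iff)
  then show ?case using Suc by simp
qed simp

lemma left_inv_series_closed: "q \<in> carrier S \<Longrightarrow> left_inv_series q \<in> carrier S"
  by (simp add: carrier_S_iff left_inv_series_def inv_prefix_closed)

lemma left_inv_series_Suc:
  assumes q: "q \<in> carrier S"
  shows "left_inv_series q (Suc n) = (\<Oplus>i\<in>{..n}. left_inv_series q i \<otimes> (\<Psi> ^^ i) (q (Suc n - i)))"
proof -
  have "left_inv_series q (Suc n) = (\<Oplus>i\<in>{..n}. inv_prefix q n i \<otimes> (\<Psi> ^^ i) (q (Suc n - i)))"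
    by (simp add: left_inv_series_def)
  also have "\<dots> = (\<Oplus>i\<in>{..n}. left_inv_series q i \<otimes> (\<Psi> ^^ i) (q (Suc n - i)))"
    using q left_inv_series_closed[OF q]
    by (intro finsum_cong') (auto simp: inv_prefix_stable carrier_S_iff)
  finally show ?thesis .
qed

lemma left_inv_series_eq:
  assumes q: "q \<in> carrier S" and q0: "q 0 = \<zero>"
  shows "left_inv_series q = \<one>\<^bsub>S\<^esub> \<oplus>\<^bsub>S\<^esub> left_inv_series q \<otimes>\<^bsub>S\<^esub> q"
proof
  fix n
  let ?u = "left_inv_series q"
  have [simp]: "q i \<in> carrier R" "?u i \<in> carrier R" for i
    using q left_inv_series_closed[OF q] by (auto simp: carrier_S_iff)
  show "?u n = (\<one>\<^bsub>S\<^esub> \<oplus>\<^bsub>S\<^esub> ?u \<otimes>\<^bsub>S\<^esub> q) n"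
  proof (cases n)
    case 0
    then show ?thesis by (simp add: add_S_apply one_S_apply mult_S_apply q0 left_inv_series_def)
  next
    case (Suc m)
    have "(?u \<otimes>\<^bsub>S\<^esub> q) (Suc m) = ?u (Suc m) \<otimes> (\<Psi> ^^ Suc m) (q 0)
        \<oplus> (\<Oplus>i\<in>{..m}. ?u i \<otimes> (\<Psi> ^^ i) (q (Suc m - i)))"
      by (simp add: mult_S_apply Pi_def del: funpow.simps)
    also have "\<dots> = ?u (Suc m)"
      by (simp add: q0 left_inv_series_Suc[OF q] del: funpow.simps)
    finally show ?thesis using Suc by (simp add: add_S_apply one_S_apply)
  qed
qed

lemma one_minus_left_invertible:
  assumes q: "q \<in> carrier S" and q0: "q 0 = \<zero>"
  shows "\<exists>u\<in>carrier S. u \<otimes>\<^bsub>S\<^esub> (\<one>\<^bsub>S\<^esub> \<ominus>\<^bsub>S\<^esub> q) = \<one>\<^bsub>S\<^esub>"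
proof
  let ?u = "left_inv_series q"
  show u: "?u \<in> carrier S" using q by (rule left_inv_series_closed)
  have "?u \<otimes>\<^bsub>S\<^esub> (\<one>\<^bsub>S\<^esub> \<ominus>\<^bsub>S\<^esub> q) = (\<one>\<^bsub>S\<^esub> \<oplus>\<^bsub>S\<^esub> ?u \<otimes>\<^bsub>S\<^esub> q) \<ominus>\<^bsub>S\<^esub> ?u \<otimes>\<^bsub>S\<^esub> q"
    using u q by (simp add: a_minus_def S.r_distr S.r_minus flip: left_inv_series_eq[OF q q0])
  also have "\<dots> = \<one>\<^bsub>S\<^esub>"
    using u q by (simp add: a_minus_def S.a_assoc S.r_neg)
  finally show "?u \<otimes>\<^bsub>S\<^esub> (\<one>\<^bsub>S\<^esub> \<ominus>\<^bsub>S\<^esub> q) = \<one>\<^bsub>S\<^esub>" .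
qed

lemma kernel_coeff0_subset_jacobson_radical:
  "a_kernel S R (\<lambda>f. f 0) \<subseteq> jacobson_radical S"
proof
  fix k assume "k \<in> a_kernel S R (\<lambda>f. f 0)"
  then have k: "k \<in> carrier S" "k 0 = \<zero>" by (simp_all add: a_kernel_def')
  show "k \<in> jacobson_radical S"
  proof (rule S.left_quasi_regular_in_jacobson_radical[OF k(1)])
    fix s assume s: "s \<in> carrier S"
    then have "(s \<otimes>\<^bsub>S\<^esub> k) 0 = \<zero>" using k by (simp add: mult_S_apply carrier_S_iff)
    then show "\<exists>u\<in>carrier S. u \<otimes>\<^bsub>S\<^esub> (\<one>\<^bsub>S\<^esub> \<ominus>\<^bsub>S\<^esub> s \<otimes>\<^bsub>S\<^esub> k) = \<one>\<^bsub>S\<^esub>"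
      using one_minus_left_invertible s k(1) by blast
  qed
qed

end

theorem corollary2p27:
  fixes R :: "('a, 'b) ring_scheme" and \<Psi> :: "'a \<Rightarrow> 'a"
  assumes "ring R" and "\<Psi> \<in> ring_hom R R"
  shows "NJ_symmetric R \<longleftrightarrow> NJ_symmetric (skew_fps_ring R \<Psi>)"
proof -
  interpret skew_fps R \<Psi>
    by (intro skew_fps.intro skew_fps_axioms.intro assms)
  have "\<And>a. a \<in> carrier R \<Longrightarrow> const_series a 0 = a"
    by (simp add: const_series_def)
  then have "NJ_symmetric (skew_fps_ring R \<Psi>) \<longleftrightarrow> NJ_symmetric R"
    using coeff0_ring_hom_ring const_series_ring_hom kernel_coeff0_subset_jacobson_radical
    by (intro ring_hom_ring.NJ_symmetric_iff_of_retraction)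
  then show ?thesis by simp
qed

end
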